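(* Let $\mathcal{M}$ be a space of closed smooth Riemannian manifolds, considered up to isospectrality, and let $\gamma$ be a real number with $\sup\{\dim X: X\in\mathcal{M}\}<2\gamma$. For $X_1,X_2\in\mathcal{M}$ define \[ d(X_1,X_2):=\sup_{\gamma<s<\gamma+1}\left|\log\left|\frac{\zeta_{X_1}(s)}{\zeta_{X_2}(s)}\right|\right|, \] where $\Re(s)>\gamma$ is a common half plane of convergence of the spectral zeta functions of $X_1$ and $X_2$. Then $d$ defines a metric on $\mathcal{M}$.
   Context: Two Riemannian manifolds are isospectral if their Laplace–Beltrami operators have the same spectrum with multiplicities. For a closed smooth Riemannian manifold $X$ with Laplace–Beltrami operator $\Delta_X$, the spectral zeta function is $\zeta_X(s)=\mathrm{tr}(\Delta_X^{-s})=\sum_{\lambda}\lambda^{-s}$, the sum running over the nonzero eigenvalues of $\Delta_X$ counted with multiplicity; it converges absolutely for $\Re(s)>\dim(X)/2$. *)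

theory Defs
  imports "HOL-Analysis.Analysis"
begin

text \<open>A closed Riemannian manifold is represented, up to isospectrality, by its
  spectrum of nonzero Laplace eigenvalues, given as a multiplicity function
  m :: real => nat (m l = multiplicity of l as an eigenvalue).\<close>

definition spec_support :: "(real \<Rightarrow> nat) \<Rightarrow> real set" where
  "spec_support m = {l. 0 < m l}"

definition spec_zeta :: "(real \<Rightarrow> nat) \<Rightarrow> real \<Rightarrow> real" where
  "spec_zeta m s = (\<Sum>\<^sub>\<infinity>l\<in>spec_support m. real (m l) * l powr (-s))"

text \<open>Spectral data of an n-dimensional closed manifold: nonzero eigenvalues
  are positive, there is at least one, and the zeta series converges
  absolutely for s > n/2.\<close>
definition admissible_spectrum :: "nat \<Rightarrow> (real \<Rightarrow> nat) \<Rightarrow> bool" where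
  "admissible_spectrum n m \<longleftrightarrow>
     spec_support m \<subseteq> {0<..} \<and> spec_support m \<noteq> {} \<and>
     (\<forall>s::real. real n / 2 < s \<longrightarrow>
        (\<lambda>l. real (m l) * l powr (-s)) summable_on spec_support m)"

definition zeta_dist :: "real \<Rightarrow> (real \<Rightarrow> nat) \<Rightarrow> (real \<Rightarrow> nat) \<Rightarrow> real" where
  "zeta_dist \<gamma> X1 X2 =
     (SUP s\<in>{\<gamma><..<\<gamma>+1}. \<bar>ln \<bar>spec_zeta X1 s / spec_zeta X2 s\<bar>\<bar>)"

end

theory Submission
  imports Defs "HOL-Complex_Analysis.Complex_Analysis"
begin

text \<open>The distance is the sup-distance on \<open>(\<gamma>, \<gamma>+1)\<close> of the functions
  \<open>s \<mapsto> ln \<zeta>\<^sub>X(s)\<close>, which are bounded there because \<open>\<zeta>\<^sub>X\<close> lies between a single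
  positive term and \<open>\<zeta>\<^sub>X(\<gamma>) + \<zeta>\<^sub>X(\<gamma>+1)\<close>; so only definiteness has content.
  If \<open>\<zeta>\<^sub>X\<^sub>1 = \<zeta>\<^sub>X\<^sub>2\<close> on the interval, the difference \<open>\<Sum> c\<^sub>\<lambda> \<lambda>\<^sup>-\<^sup>s\<close> of the two
  Dirichlet series is holomorphic on a half plane and therefore vanishes on a whole real
  half line. Its coefficients are integers, so only finitely many \<open>\<lambda>\<close> below any bound have
  \<open>c\<^sub>\<lambda> \<noteq> 0\<close>; if there were any, the least one would be isolated from the others, and
  for \<open>s \<rightarrow> \<infinity>\<close> its term would dominate the rest of the series.\<close>

lemma powr_neg_le_add_endpoints:
  fixes l a b s :: real
  assumes "0 < l" "a \<le> s" "s \<le> b"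
  shows "l powr (-s) \<le> l powr (-a) + l powr (-b)"
proof (cases "1 \<le> l")
  case True
  then have "l powr (-s) \<le> l powr (-a)" using assms by (intro powr_mono) auto
  then show ?thesis by (smt (verit) powr_ge_zero)
next
  case False
  then have "l powr (-s) \<le> l powr (-b)" using assms by (intro powr_mono') auto
  then show ?thesis by (smt (verit) powr_ge_zero)
qed

lemma min_endpoints_le_powr_neg:
  fixes l a b s :: real
  assumes "0 < l" "a \<le> s" "s \<le> b"
  shows "min (l powr (-a)) (l powr (-b)) \<le> l powr (-s)"
proof (cases "1 \<le> l")
  case True
  then have "l powr (-b) \<le> l powr (-s)" using assms by (intro powr_mono) auto
  then show ?thesis by linarith
next
  case False
  then have "l powr (-a) \<le> l powr (-s)" using assms by (intro powr_mono') auto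
  then show ?thesis by linarith
qed

section \<open>Sup-distance of bounded functions\<close>

definition sup_dist :: "'a set \<Rightarrow> ('a \<Rightarrow> real) \<Rightarrow> ('a \<Rightarrow> real) \<Rightarrow> real" where
  "sup_dist A f g = (SUP x\<in>A. \<bar>f x - g x\<bar>)"

lemma bdd_above_abs_diff:
  fixes f g :: "'a \<Rightarrow> real"
  assumes "bounded (f ` A)" "bounded (g ` A)"
  shows "bdd_above ((\<lambda>x. \<bar>f x - g x\<bar>) ` A)"
proof -
  obtain Bf Bg where "\<forall>x\<in>A. \<bar>f x\<bar> \<le> Bf" "\<forall>x\<in>A. \<bar>g x\<bar> \<le> Bg"
    using assms by (auto simp: bounded_real)
  then have "\<forall>x\<in>A. \<bar>f x - g x\<bar> \<le> Bf + Bg" by force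
  then show ?thesis by (intro bdd_aboveI2) auto
qed

lemma sup_dist_upper:
  fixes f g :: "'a \<Rightarrow> real"
  assumes "x \<in> A" "bounded (f ` A)" "bounded (g ` A)"
  shows "\<bar>f x - g x\<bar> \<le> sup_dist A f g"
  unfolding sup_dist_def using assms by (intro cSUP_upper bdd_above_abs_diff)

lemma sup_dist_least:
  fixes f g :: "'a \<Rightarrow> real"
  assumes "A \<noteq> {}" "\<And>x. x \<in> A \<Longrightarrow> \<bar>f x - g x\<bar> \<le> B"
  shows "sup_dist A f g \<le> B"
  unfolding sup_dist_def using assms by (intro cSUP_least)

lemma sup_dist_nonneg:
  fixes f g :: "'a \<Rightarrow> real"
  assumes "A \<noteq> {}" "bounded (f ` A)" "bounded (g ` A)"
  shows "0 \<le> sup_dist A f g"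
proof -
  obtain x where "x \<in> A" using assms(1) by blast
  then show ?thesis using sup_dist_upper[OF _ assms(2,3)] by (smt (verit))
qed

lemma sup_dist_commute: "sup_dist A f g = sup_dist A g f"
  unfolding sup_dist_def by (simp add: abs_minus_commute)

lemma sup_dist_triangle:
  fixes f g h :: "'a \<Rightarrow> real"
  assumes "A \<noteq> {}" "bounded (f ` A)" "bounded (g ` A)" "bounded (h ` A)"
  shows "sup_dist A f h \<le> sup_dist A f g + sup_dist A g h"
proof (rule sup_dist_least[OF assms(1)])
  fix x assume "x \<in> A"
  then show "\<bar>f x - h x\<bar> \<le> sup_dist A f g + sup_dist A g h"
    using sup_dist_upper[of x A f g] sup_dist_upper[of x A g h] assms by linarith
qed

lemma sup_dist_eq_0_iff:
  fixes f g :: "'a \<Rightarrow> real"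
  assumes "A \<noteq> {}" "bounded (f ` A)" "bounded (g ` A)"
  shows "sup_dist A f g = 0 \<longleftrightarrow> (\<forall>x\<in>A. f x = g x)"
proof
  assume "sup_dist A f g = 0"
  then show "\<forall>x\<in>A. f x = g x" using sup_dist_upper[OF _ assms(2,3)] by fastforce
next
  assume "\<forall>x\<in>A. f x = g x"
  then have "sup_dist A f g \<le> 0" by (intro sup_dist_least[OF assms(1)]) auto
  then show "sup_dist A f g = 0" using sup_dist_nonneg[OF assms] by linarith
qed

section \<open>Bounds for the spectral zeta function\<close>

lemma spec_zeta_summable:
  assumes "admissible_spectrum n m" "real n / 2 < s"
  shows "(\<lambda>l. real (m l) * l powr (-s)) summable_on spec_support m"
  using assms unfolding admissible_spectrum_def by blast

lemma spec_zeta_summable_superset: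
  assumes "admissible_spectrum n m" "real n / 2 < s" "spec_support m \<subseteq> S"
  shows "(\<lambda>l. real (m l) * l powr (-s)) summable_on S"
  using spec_zeta_summable[OF assms(1,2)]
  by (rule summable_on_cong_neutral[THEN iffD1, rotated -1])
    (use assms(3) in \<open>auto simp: spec_support_def\<close>)

lemma spec_zeta_eq_infsum_superset:
  assumes "spec_support m \<subseteq> S"
  shows "spec_zeta m s = (\<Sum>\<^sub>\<infinity>l\<in>S. real (m l) * l powr (-s))"
  unfolding spec_zeta_def
  by (rule infsum_cong_neutral) (use assms in \<open>auto simp: spec_support_def\<close>)

lemma spec_zeta_ge_term:
  assumes "admissible_spectrum n m" "real n / 2 < s" "l \<in> spec_support m"
  shows "real (m l) * l powr (-s) \<le> spec_zeta m s"
proof -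
  have "real (m l) * l powr (-s) = (\<Sum>l'\<in>{l}. real (m l') * l' powr (-s))" by simp
  also have "\<dots> \<le> spec_zeta m s"
    unfolding spec_zeta_def using assms by (intro finite_sum_le_infsum spec_zeta_summable) auto
  finally show ?thesis .
qed

lemma spec_zeta_pos:
  assumes "admissible_spectrum n m" "real n / 2 < s"
  shows "0 < spec_zeta m s"
proof -
  obtain l where l: "l \<in> spec_support m" "0 < l"
    using assms(1) unfolding admissible_spectrum_def by blast
  then have "0 < real (m l) * l powr (-s)" by (simp add: spec_support_def)
  then show ?thesis using spec_zeta_ge_term[OF assms l(1)] by linarith
qed

lemma spec_zeta_le_add_endpoints:
  assumes adm: "admissible_spectrum n m" and "real n / 2 < a" "a \<le> s" "s \<le> b"
  shows "spec_zeta m s \<le> spec_zeta m a + spec_zeta m b"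
proof -
  let ?t = "\<lambda>s l. real (m l) * l powr (-s)"
  have sm: "?t s' summable_on spec_support m" if "a \<le> s'" for s'
    using assms that by (intro spec_zeta_summable[OF adm]) auto
  have "spec_zeta m s \<le> (\<Sum>\<^sub>\<infinity>l\<in>spec_support m. ?t a l + ?t b l)"
    unfolding spec_zeta_def
  proof (rule infsum_mono[OF sm summable_on_add[OF sm sm]])
    fix l assume "l \<in> spec_support m"
    then have "l powr (-s) \<le> l powr (-a) + l powr (-b)"
      using adm assms by (intro powr_neg_le_add_endpoints) (auto simp: admissible_spectrum_def)
    then show "?t s l \<le> ?t a l + ?t b l"
      by (simp add: distrib_left[symmetric] mult_left_mono)
  qed (use assms in auto)
  also have "\<dots> = spec_zeta m a + spec_zeta m b"
    unfolding spec_zeta_def using assms by (intro infsum_add sm) auto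
  finally show ?thesis .
qed

lemma spec_zeta_lower_bound:
  assumes adm: "admissible_spectrum n m" and "real n / 2 < a"
  obtains L where "0 < L" "\<And>s. s \<in> {a..b} \<Longrightarrow> L \<le> spec_zeta m s"
proof -
  obtain l where l: "l \<in> spec_support m" "0 < l"
    using adm unfolding admissible_spectrum_def by blast
  have "min (l powr (-a)) (l powr (-b)) \<le> spec_zeta m s" if s: "s \<in> {a..b}" for s
  proof -
    have "min (l powr (-a)) (l powr (-b)) \<le> l powr (-s)"
      using l s by (intro min_endpoints_le_powr_neg) auto
    also have "\<dots> \<le> real (m l) * l powr (-s)"
      using l by (simp add: spec_support_def mult_le_cancel_right1)
    also have "\<dots> \<le> spec_zeta m s" using assms s l by (intro spec_zeta_ge_term) auto
    finally show ?thesis .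
  qed
  moreover have "0 < min (l powr (-a)) (l powr (-b))" using l by simp
  ultimately show ?thesis using that by blast
qed

lemma bounded_ln_spec_zeta:
  assumes adm: "admissible_spectrum n m" and "real n / 2 < a"
  shows "bounded ((\<lambda>s. ln (spec_zeta m s)) ` {a..b})"
proof -
  obtain L where L: "0 < L" "\<And>s. s \<in> {a..b} \<Longrightarrow> L \<le> spec_zeta m s"
    using spec_zeta_lower_bound[OF assms] by blast
  define U where "U = spec_zeta m a + spec_zeta m b"
  have "\<bar>ln (spec_zeta m s)\<bar> \<le> \<bar>ln L\<bar> + \<bar>ln U\<bar>" if s: "s \<in> {a..b}" for s
  proof -
    have "L \<le> spec_zeta m s" "spec_zeta m s \<le> U"
      using L(2)[OF s] spec_zeta_le_add_endpoints[OF assms, of s b] s by (auto simp: U_def)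
    then have "ln L \<le> ln (spec_zeta m s)" "ln (spec_zeta m s) \<le> ln U" using L(1) by auto
    then show ?thesis by linarith
  qed
  then show ?thesis unfolding bounded_real by blast
qed

lemma zeta_dist_eq_sup_dist:
  assumes "admissible_spectrum n1 m1" "admissible_spectrum n2 m2"
    and "real n1 / 2 \<le> \<gamma>" "real n2 / 2 \<le> \<gamma>"
  shows "zeta_dist \<gamma> m1 m2 =
    sup_dist {\<gamma><..<\<gamma>+1} (\<lambda>s. ln (spec_zeta m1 s)) (\<lambda>s. ln (spec_zeta m2 s))"
  unfolding zeta_dist_def sup_dist_def
proof (rule SUP_cong)
  fix s assume "s \<in> {\<gamma><..<\<gamma>+1}"
  then have "0 < spec_zeta m1 s" "0 < spec_zeta m2 s"
    using assms by (auto intro: spec_zeta_pos)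
  then show "\<bar>ln \<bar>spec_zeta m1 s / spec_zeta m2 s\<bar>\<bar> = \<bar>ln (spec_zeta m1 s) - ln (spec_zeta m2 s)\<bar>"
    by (simp add: ln_div)
qed simp

section \<open>Uniqueness of Dirichlet series with integer coefficients\<close>

lemma finite_nonzero_coeffs_below:
  fixes c :: "real \<Rightarrow> real" and S :: "real set"
  assumes pos: "S \<subseteq> {0<..}" and "0 \<le> s"
    and sm: "(\<lambda>l. \<bar>c l\<bar> * l powr (-s)) summable_on S"
    and int: "\<And>l. c l \<noteq> 0 \<Longrightarrow> 1 \<le> \<bar>c l\<bar>"
  shows "finite {l\<in>S. c l \<noteq> 0 \<and> l \<le> x}"
proof (rule ccontr)
  let ?W = "{l\<in>S. c l \<noteq> 0 \<and> l \<le> x}"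
  let ?f = "\<lambda>l. \<bar>c l\<bar> * l powr (-s)"
  assume inf: "infinite ?W"
  then obtain l where "l \<in> ?W" by (metis ex_in_conv finite.emptyI)
  then have "0 < x" using pos by fastforce
  define e where "e = x powr (-s)"
  have e: "0 < e" using \<open>0 < x\<close> by (simp add: e_def)
  obtain N :: nat where N: "infsum ?f S < real N * e"
    using reals_Archimedean3[OF e] by blast
  obtain F where F: "F \<subseteq> ?W" "finite F" "card F = N"
    using infinite_arbitrarily_large[OF inf] by blast
  have "real N * e = (\<Sum>l\<in>F. e)" using F by simp
  also have "\<dots> \<le> sum ?f F"
  proof (rule sum_mono)
    fix l assume "l \<in> F"
    then have l: "0 < l" "l \<le> x" "1 \<le> \<bar>c l\<bar>" using F pos int by auto
    have "e \<le> l powr (-s)" unfolding e_def using l \<open>0 \<le> s\<close> by (intro powr_mono2') auto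
    also have "\<dots> \<le> ?f l" using l by (simp add: mult_le_cancel_right1)
    finally show "e \<le> ?f l" .
  qed
  also have "\<dots> \<le> infsum ?f S" using F by (intro finite_sum_le_infsum[OF sm]) auto
  finally show False using N by linarith
qed

lemma least_element_with_gap:
  fixes T :: "real set"
  assumes "T \<noteq> {}" and fin: "\<And>x. finite {l\<in>T. l \<le> x}"
  obtains l0 r where "l0 \<in> T" "l0 < r" "\<And>l. l \<in> T \<Longrightarrow> l0 \<le> l"
    "\<And>l. l \<in> T - {l0} \<Longrightarrow> r \<le> l"
proof -
  obtain x where x: "x \<in> T" using assms(1) by blast
  define l0 where "l0 = Min {l\<in>T. l \<le> x}"
  have l0: "l0 \<in> T" "l0 \<le> x" using fin[of x] x Min_in[of "{l\<in>T. l \<le> x}"] by (auto simp: l0_def)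
  have least: "l0 \<le> l" if "l \<in> T" for l
    using that fin[of x] l0(2) by (cases "l \<le> x") (auto simp: l0_def)
  define F where "F = {l\<in>T. l \<le> l0 + 1} - {l0}"
  have "finite F" using fin by (simp add: F_def)
  define r where "r = Min (insert (l0 + 1) F)"
  have "r \<in> insert (l0 + 1) F" unfolding r_def using \<open>finite F\<close> by (intro Min_in) auto
  then have "l0 < r" using least by (force simp: F_def)
  moreover have "r \<le> l" if "l \<in> T - {l0}" for l
  proof (cases "l \<le> l0 + 1")
    case True
    then show ?thesis using that \<open>finite F\<close> by (simp add: r_def F_def)
  next
    case False
    moreover have "r \<le> l0 + 1" using \<open>finite F\<close> by (simp add: r_def)
    ultimately show ?thesis by linarith
  qed
  ultimately show ?thesis using that l0(1) least by blast
qed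

lemma powr_neg_add_nat:
  fixes l s :: real
  assumes "0 < l"
  shows "l powr (-(s + real n)) = l powr (-s) / l ^ n"
proof -
  have "l powr (-(s + real n)) = l powr (-s - real n)" by simp
  also have "\<dots> = l powr (-s) / l ^ n" using assms by (simp add: powr_diff powr_realpow)
  finally show ?thesis .
qed

lemma infsum_abs_powr_shift_le:
  fixes c :: "real \<Rightarrow> real" and T :: "real set"
  assumes sm: "(\<lambda>l. \<bar>c l\<bar> * l powr (-s)) summable_on T" and "0 < r" and r: "\<And>l. l \<in> T \<Longrightarrow> r \<le> l"
  shows "(\<Sum>\<^sub>\<infinity>l\<in>T. \<bar>c l\<bar> * l powr (-(s + real n))) \<le> (\<Sum>\<^sub>\<infinity>l\<in>T. \<bar>c l\<bar> * l powr (-s)) / r ^ n"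
proof -
  let ?g = "\<lambda>l. \<bar>c l\<bar> * l powr (-s) * (1 / r ^ n)"
  have le: "\<bar>c l\<bar> * l powr (-(s + real n)) \<le> ?g l" if l: "l \<in> T" for l
  proof -
    have "0 < l" using r[OF l] \<open>0 < r\<close> by linarith
    have "r ^ n \<le> l ^ n" using r[OF l] \<open>0 < r\<close> by (intro power_mono) auto
    then have "l powr (-s) / l ^ n \<le> l powr (-s) / r ^ n"
      using \<open>0 < r\<close> \<open>0 < l\<close> by (intro divide_left_mono) auto
    from mult_left_mono[OF this abs_ge_zero[of "c l"]] show ?thesis
      unfolding powr_neg_add_nat[OF \<open>0 < l\<close>] by simp
  qed
  have sm_g: "?g summable_on T" by (rule summable_on_cmult_left[OF sm])
  then have "(\<lambda>l. \<bar>c l\<bar> * l powr (-(s + real n))) summable_on T"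
    by (rule summable_on_comparison_test) (use le in auto)
  then have "(\<Sum>\<^sub>\<infinity>l\<in>T. \<bar>c l\<bar> * l powr (-(s + real n))) \<le> infsum ?g T"
    using le by (intro infsum_mono sm_g)
  also have "\<dots> = (\<Sum>\<^sub>\<infinity>l\<in>T. \<bar>c l\<bar> * l powr (-s)) * (1 / r ^ n)"
    by (rule infsum_cmult_left')
  finally show ?thesis by simp
qed

lemma dirichlet_series_eq_0_imp_coeffs_eq_0:
  fixes c :: "real \<Rightarrow> real" and S :: "real set"
  assumes pos: "S \<subseteq> {0<..}" and "0 \<le> \<sigma>"
    and abs_sm: "\<And>s. \<sigma> < s \<Longrightarrow> (\<lambda>l. \<bar>c l\<bar> * l powr (-s)) summable_on S"
    and zero: "\<And>s. \<sigma> < s \<Longrightarrow> (\<Sum>\<^sub>\<infinity>l\<in>S. c l * l powr (-s)) = 0"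
    and int: "\<And>l. c l \<noteq> 0 \<Longrightarrow> 1 \<le> \<bar>c l\<bar>"
  shows "\<forall>l\<in>S. c l = 0"
proof (rule ccontr)
  define T where "T = {l\<in>S. c l \<noteq> 0}"
  assume "\<not> (\<forall>l\<in>S. c l = 0)"
  then have "T \<noteq> {}" by (auto simp: T_def)
  define s1 where "s1 = \<sigma> + 1"
  have s1: "0 \<le> s1" "\<sigma> < s1" using \<open>0 \<le> \<sigma>\<close> by (auto simp: s1_def)
  have "finite {l\<in>T. l \<le> x}" for x
    using finite_nonzero_coeffs_below[OF pos s1(1) abs_sm[OF s1(2)] int, of x]
    by (simp add: T_def conj_assoc)
  then obtain l0 r where l0: "l0 \<in> T" "l0 < r" and gap: "\<And>l. l \<in> T - {l0} \<Longrightarrow> r \<le> l"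
    using least_element_with_gap[OF \<open>T \<noteq> {}\<close>] by metis
  have "0 < l0" using l0 pos by (auto simp: T_def)
  have absT: "(\<lambda>l. \<bar>c l\<bar> * l powr (-s)) summable_on T - {l0}" if "\<sigma> < s" for s
    using abs_sm[OF that] by (rule summable_on_subset) (auto simp: T_def)
  define K where "K = (\<Sum>\<^sub>\<infinity>l\<in>T - {l0}. \<bar>c l\<bar> * l powr (-s1))"
  have bound: "\<bar>c l0\<bar> * l0 powr (-s1) \<le> K * (l0 / r) ^ n" for n
  proof -
    define s where "s = s1 + real n"
    have "\<sigma> < s" using s1 by (simp add: s_def)
    have sm: "(\<lambda>l. norm (c l * l powr (-s))) summable_on T - {l0}"
      using absT[OF \<open>\<sigma> < s\<close>] by (simp add: abs_mult)
    have "0 = (\<Sum>\<^sub>\<infinity>l\<in>S. c l * l powr (-s))" using zero[OF \<open>\<sigma> < s\<close>] by simp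
    also have "\<dots> = (\<Sum>\<^sub>\<infinity>l\<in>insert l0 (T - {l0}). c l * l powr (-s))"
      by (rule infsum_cong_neutral) (use l0 in \<open>auto simp: T_def\<close>)
    also have "\<dots> = c l0 * l0 powr (-s) + (\<Sum>\<^sub>\<infinity>l\<in>T - {l0}. c l * l powr (-s))"
      by (rule infsum_insert[OF abs_summable_summable[OF sm]]) simp
    finally have "\<bar>c l0 * l0 powr (-s)\<bar> = norm (\<Sum>\<^sub>\<infinity>l\<in>T - {l0}. c l * l powr (-s))"
      by (simp add: eq_neg_iff_add_eq_0 add.commute)
    also have "\<dots> \<le> (\<Sum>\<^sub>\<infinity>l\<in>T - {l0}. \<bar>c l\<bar> * l powr (-s))"
      using norm_infsum_bound[OF sm] by (simp add: abs_mult)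
    also have "\<dots> \<le> K / r ^ n" unfolding s_def K_def
      by (rule infsum_abs_powr_shift_le[OF absT[OF s1(2)]]) (use l0 gap \<open>0 < l0\<close> in auto)
    finally have "\<bar>c l0 * l0 powr (-s)\<bar> \<le> K / r ^ n" .
    then have "\<bar>c l0\<bar> * l0 powr (-s1) / l0 ^ n \<le> K / r ^ n"
      using \<open>0 < l0\<close> unfolding s_def powr_neg_add_nat[OF \<open>0 < l0\<close>] by (simp add: abs_mult)
    then show ?thesis using \<open>0 < l0\<close> \<open>l0 < r\<close> by (simp add: field_simps power_divide)
  qed
  have "(\<lambda>n. K * (l0 / r) ^ n) \<longlonglongrightarrow> K * 0"
    using \<open>0 < l0\<close> \<open>l0 < r\<close> by (intro tendsto_mult tendsto_const LIMSEQ_power_zero) auto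
  then have "\<bar>c l0\<bar> * l0 powr (-s1) \<le> 0"
    using bound by (intro LIMSEQ_le_const) auto
  moreover have "0 < \<bar>c l0\<bar> * l0 powr (-s1)" using l0 \<open>0 < l0\<close> by (simp add: T_def)
  ultimately show False by linarith
qed

lemma holomorphic_on_dirichlet_series:
  fixes c :: "real \<Rightarrow> real" and S :: "real set"
  assumes pos: "S \<subseteq> {0<..}"
    and abs_sm: "\<And>s. \<sigma> < s \<Longrightarrow> (\<lambda>l. \<bar>c l\<bar> * l powr (-s)) summable_on S"
  shows "(\<lambda>z. \<Sum>\<^sub>\<infinity>l\<in>S. of_real (c l) * exp (- z * of_real (ln l))) holomorphic_on {z. \<sigma> < Re z}"
proof -
  define t where "t = (\<lambda>l (z::complex). of_real (c l) * exp (- z * of_real (ln l)))"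
  define G where "G = (\<lambda>z. \<Sum>\<^sub>\<infinity>l\<in>S. t l z)"
  have "G holomorphic_on ball z0 r" if z0: "\<sigma> < Re z0" and r: "r = (Re z0 - \<sigma>) / 2" for z0 r
  proof -
    define M where "M = (\<lambda>l. \<bar>c l\<bar> * l powr (-(Re z0 - r)) + \<bar>c l\<bar> * l powr (-(Re z0 + r)))"
    have "M summable_on S" unfolding M_def using z0 r by (intro summable_on_add abs_sm) auto
    moreover have "norm (t l z) \<le> M l" if l: "l \<in> S" and z: "z \<in> cball z0 r" for l z
    proof -
      have "0 < l" using l pos by auto
      have "\<bar>Re z - Re z0\<bar> \<le> r"
        using z abs_Re_le_cmod[of "z - z0"] by (simp add: dist_norm norm_minus_commute)
      then have "l powr (- Re z) \<le> l powr (-(Re z0 - r)) + l powr (-(Re z0 + r))"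
        using \<open>0 < l\<close> by (intro powr_neg_le_add_endpoints) auto
      then have "\<bar>c l\<bar> * l powr (- Re z) \<le> M l"
        unfolding M_def by (metis abs_ge_zero distrib_left mult_left_mono)
      then show ?thesis using \<open>0 < l\<close> by (simp add: t_def norm_mult powr_def)
    qed
    ultimately have lim: "uniform_limit (cball z0 r) (\<lambda>X z. \<Sum>l\<in>X. t l z) G (finite_subsets_at_top S)"
      unfolding G_def by (intro Weierstrass_m_test_general) auto
    have "\<forall>\<^sub>F X in finite_subsets_at_top S.
        continuous_on (cball z0 r) (\<lambda>z. \<Sum>l\<in>X. t l z) \<and> (\<lambda>z. \<Sum>l\<in>X. t l z) holomorphic_on ball z0 r"
      unfolding t_def by (intro always_eventually allI conjI continuous_intros holomorphic_intros)
    then obtain "G holomorphic_on ball z0 r" by (rule holomorphic_uniform_limit[OF _ lim]) simp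
    then show ?thesis .
  qed
  then have "G field_differentiable (at z0)" if "\<sigma> < Re z0" for z0
    using that by (intro holomorphic_on_imp_differentiable_at[of _ "ball z0 ((Re z0 - \<sigma>) / 2)"]) auto
  then show ?thesis
    unfolding holomorphic_on_def G_def t_def by (blast intro: field_differentiable_at_within)
qed

lemma dirichlet_series_eq_0_on_half_line:
  fixes c :: "real \<Rightarrow> real" and S :: "real set"
  assumes pos: "S \<subseteq> {0<..}"
    and abs_sm: "\<And>s. \<sigma> < s \<Longrightarrow> (\<lambda>l. \<bar>c l\<bar> * l powr (-s)) summable_on S"
    and "\<sigma> \<le> a" "a < b"
    and zero: "\<And>s. s \<in> {a<..<b} \<Longrightarrow> (\<Sum>\<^sub>\<infinity>l\<in>S. c l * l powr (-s)) = 0"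
    and "\<sigma> < s"
  shows "(\<Sum>\<^sub>\<infinity>l\<in>S. c l * l powr (-s)) = 0"
proof -
  define G :: "complex \<Rightarrow> complex"
    where "G = (\<lambda>z. \<Sum>\<^sub>\<infinity>l\<in>S. of_real (c l) * exp (- z * of_real (ln l)))"
  define H where "H = {z. \<sigma> < Re z}"
  have G_of_real: "G (of_real s') = of_real (\<Sum>\<^sub>\<infinity>l\<in>S. c l * l powr (-s'))" if "\<sigma> < s'" for s'
  proof -
    have "(\<lambda>l. norm (c l * l powr (-s'))) summable_on S"
      using abs_sm[OF that] by (simp add: abs_mult)
    then have "(\<lambda>l. c l * l powr (-s')) summable_on S" by (rule abs_summable_summable)
    then have "((\<lambda>l. of_real (c l * l powr (-s')) :: complex) has_sum
        of_real (\<Sum>\<^sub>\<infinity>l\<in>S. c l * l powr (-s'))) S"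
      by (rule has_sum_of_real[OF has_sum_infsum])
    moreover have "of_real (c l) * exp (- of_real s' * of_real (ln l)) = (of_real (c l * l powr (-s')) :: complex)"
      if "l \<in> S" for l
      using that pos by (auto simp: powr_def exp_of_real[symmetric])
    ultimately show ?thesis unfolding G_def by (metis (no_types, lifting) infsumI infsum_cong)
  qed
  have "G (of_real s) = 0"
  proof (rule analytic_continuation[where f = G and S = H and U = "of_real ` {a<..<b}" and \<xi> = "of_real b"])
    show "G holomorphic_on H" unfolding G_def H_def by (rule holomorphic_on_dirichlet_series[OF pos abs_sm])
    show "open H" "connected H"
      unfolding H_def by (auto intro: open_halfspace_Re_gt convex_connected convex_halfspace_Re_gt)
    show "of_real b islimpt complex_of_real ` {a<..<b}"
      by (rule islimpt_isCont_image[OF islimpt_greaterThanLessThan2]) (auto simp: \<open>a < b\<close> eventually_at_filter)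
    show "G z = 0" if "z \<in> of_real ` {a<..<b}" for z
      using that G_of_real zero \<open>\<sigma> \<le> a\<close> by force
  qed (use \<open>\<sigma> \<le> a\<close> \<open>a < b\<close> \<open>\<sigma> < s\<close> in \<open>auto simp: H_def\<close>)
  then show ?thesis using G_of_real[OF \<open>\<sigma> < s\<close>] by simp
qed

lemma spec_zeta_eq_on_interval_imp_eq:
  assumes adm1: "admissible_spectrum n1 m1" and adm2: "admissible_spectrum n2 m2"
    and "real n1 / 2 \<le> a" "real n2 / 2 \<le> a" "a < b"
    and eq: "\<And>s. s \<in> {a<..<b} \<Longrightarrow> spec_zeta m1 s = spec_zeta m2 s"
  shows "m1 = m2"
proof -
  define \<sigma> where "\<sigma> = max (real n1) (real n2) / 2"
  define S where "S = spec_support m1 \<union> spec_support m2"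
  define c where "c l = real (m1 l) - real (m2 l)" for l
  have pos: "S \<subseteq> {0<..}" using adm1 adm2 by (auto simp: S_def admissible_spectrum_def)
  have int: "1 \<le> \<bar>c l\<bar>" if "c l \<noteq> 0" for l
  proof -
    from that consider "m1 l < m2 l" | "m2 l < m1 l" by (fastforce simp: c_def)
    then show ?thesis by cases (auto simp: c_def simp flip: of_nat_diff)
  qed
  have sm1: "(\<lambda>l. real (m1 l) * l powr (-s)) summable_on S"
   and sm2: "(\<lambda>l. real (m2 l) * l powr (-s)) summable_on S" if "\<sigma> < s" for s
    using that adm1 adm2 by (auto intro!: spec_zeta_summable_superset simp: S_def \<sigma>_def)
  have abs_sm: "(\<lambda>l. \<bar>c l\<bar> * l powr (-s)) summable_on S" if "\<sigma> < s" for s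
  proof (rule summable_on_comparison_test[OF summable_on_add[OF sm1 sm2]])
    fix l
    have "\<bar>c l\<bar> \<le> real (m1 l) + real (m2 l)" by (simp add: c_def)
    then show "\<bar>c l\<bar> * l powr (-s) \<le> real (m1 l) * l powr (-s) + real (m2 l) * l powr (-s)"
      by (metis distrib_right mult_right_mono powr_ge_zero)
  qed (use that in auto)
  have diff: "(\<Sum>\<^sub>\<infinity>l\<in>S. c l * l powr (-s)) = spec_zeta m1 s - spec_zeta m2 s" if "\<sigma> < s" for s
  proof -
    have "(\<Sum>\<^sub>\<infinity>l\<in>S. c l * l powr (-s))
        = (\<Sum>\<^sub>\<infinity>l\<in>S. real (m1 l) * l powr (-s) + - (real (m2 l) * l powr (-s)))"
      by (simp add: c_def algebra_simps)
    also have "\<dots> = spec_zeta m1 s - spec_zeta m2 s"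
      using sm1[OF that] sm2[OF that] spec_zeta_eq_infsum_superset[of m1 S] spec_zeta_eq_infsum_superset[of m2 S]
      by (subst infsum_add) (auto simp: infsum_uminus summable_on_uminus S_def)
    finally show ?thesis .
  qed
  have zero: "(\<Sum>\<^sub>\<infinity>l\<in>S. c l * l powr (-s)) = 0" if "\<sigma> < s" for s
  proof (rule dirichlet_series_eq_0_on_half_line[OF pos abs_sm _ \<open>a < b\<close> _ that])
    show "\<sigma> \<le> a" using assms by (simp add: \<sigma>_def)
    show "(\<Sum>\<^sub>\<infinity>l\<in>S. c l * l powr (-s)) = 0" if "s \<in> {a<..<b}" for s
      using that eq[OF that] diff \<open>\<sigma> \<le> a\<close> by simp
  qed
  have "0 \<le> \<sigma>" by (simp add: \<sigma>_def)
  then have c_eq_0: "\<forall>l\<in>S. c l = 0"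
    using abs_sm zero int by (rule dirichlet_series_eq_0_imp_coeffs_eq_0[OF pos])
  show ?thesis
  proof
    fix l
    show "m1 l = m2 l"
    proof (cases "l \<in> S")
      case True
      then show ?thesis using c_eq_0 by (simp add: c_def)
    next
      case False
      then show ?thesis by (simp add: S_def spec_support_def)
    qed
  qed
qed

lemma ln_spec_zeta_eq_on_interval_imp_eq:
  assumes "admissible_spectrum n1 m1" "admissible_spectrum n2 m2"
    and "real n1 / 2 \<le> a" "real n2 / 2 \<le> a" "a < b"
    and "\<And>s. s \<in> {a<..<b} \<Longrightarrow> ln (spec_zeta m1 s) = ln (spec_zeta m2 s)"
  shows "m1 = m2"
proof (rule spec_zeta_eq_on_interval_imp_eq[OF assms(1-5)])
  fix s assume s: "s \<in> {a<..<b}"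
  then have "0 < spec_zeta m1 s" "0 < spec_zeta m2 s"
    using assms(1-4) by (auto intro!: spec_zeta_pos)
  then show "spec_zeta m1 s = spec_zeta m2 s" using assms(6)[OF s] by simp
qed

theorem proposition2:
  fixes \<M> :: "(real \<Rightarrow> nat) set" and dim :: "(real \<Rightarrow> nat) \<Rightarrow> nat" and \<gamma> :: real
  assumes adm: "\<And>X. X \<in> \<M> \<Longrightarrow> admissible_spectrum (dim X) X"
    and dim_bound: "\<forall>X\<in>\<M>. real (dim X) < 2 * \<gamma>"
  shows "(\<forall>X1\<in>\<M>. \<forall>X2\<in>\<M>. 0 \<le> zeta_dist \<gamma> X1 X2)
       \<and> (\<forall>X1\<in>\<M>. \<forall>X2\<in>\<M>. zeta_dist \<gamma> X1 X2 = 0 \<longleftrightarrow> X1 = X2)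
       \<and> (\<forall>X1\<in>\<M>. \<forall>X2\<in>\<M>. zeta_dist \<gamma> X1 X2 = zeta_dist \<gamma> X2 X1)
       \<and> (\<forall>X1\<in>\<M>. \<forall>X2\<in>\<M>. \<forall>X3\<in>\<M>.
            zeta_dist \<gamma> X1 X3 \<le> zeta_dist \<gamma> X1 X2 + zeta_dist \<gamma> X2 X3)"
proof -
  let ?I = "{\<gamma><..<\<gamma>+1}"
  let ?f = "\<lambda>X s. ln (spec_zeta X s)"
  have dim: "real (dim X) / 2 < \<gamma>" if "X \<in> \<M>" for X using dim_bound that by auto
  have dist: "zeta_dist \<gamma> X1 X2 = sup_dist ?I (?f X1) (?f X2)" if "X1 \<in> \<M>" "X2 \<in> \<M>" for X1 X2
    using that dim by (intro zeta_dist_eq_sup_dist[OF adm adm] less_imp_le)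
  have bdd: "bounded (?f X ` ?I)" if "X \<in> \<M>" for X
    using bounded_ln_spec_zeta[OF adm[OF that] dim[OF that], of "\<gamma> + 1"]
    by (rule bounded_subset) auto
  have eq_iff: "(\<forall>s\<in>?I. ?f X1 s = ?f X2 s) \<longleftrightarrow> X1 = X2" if X: "X1 \<in> \<M>" "X2 \<in> \<M>" for X1 X2
    using ln_spec_zeta_eq_on_interval_imp_eq[OF adm[OF X(1)] adm[OF X(2)], where a = \<gamma> and b = "\<gamma> + 1"]
      dim[OF X(1)] dim[OF X(2)] by auto
  have "?I \<noteq> {}" by simp
  show ?thesis
  proof (intro conjI ballI)
    fix X1 X2 X3 assume X: "X1 \<in> \<M>" "X2 \<in> \<M>" "X3 \<in> \<M>"
    show "zeta_dist \<gamma> X1 X3 \<le> zeta_dist \<gamma> X1 X2 + zeta_dist \<gamma> X2 X3"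
      using X by (simp add: dist sup_dist_triangle[OF \<open>?I \<noteq> {}\<close> bdd bdd bdd])
  qed (simp_all add: dist sup_dist_nonneg[OF \<open>?I \<noteq> {}\<close> bdd bdd]
      sup_dist_eq_0_iff[OF \<open>?I \<noteq> {}\<close> bdd bdd] eq_iff sup_dist_commute)
qed

end
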